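(* Let $G$ and $H$ be connected graphs of order at least two. Then $O_{\rm SR}(G\,\square\,H)\in\{\mathcal{M},\mathcal{B}\}$. Moreover, $O_{\rm SR}(G\,\square\,H)=\mathcal{M}$ if and only if $G_{\rm SR}\cong aK_2$ and $H_{\rm SR}\cong bK_2$ for some positive integers $a,b$.
   Context: All graphs are finite, simple and undirected; $d(x,y)$ is the shortest-path distance; $aK_2$ is the disjoint union of $a$ copies of $K_2$. The Cartesian product $G\,\square\,H$ has vertex set $V(G)\times V(H)$, with $(u,w)$ adjacent to $(u',w')$ iff either $u=u'$ and $ww'\in E(H)$, or $w=w'$ and $uu'\in E(G)$. A set $S\subseteq V(X)$ is a strong resolving set of a connected graph $X$ if for all distinct $x,y\in V(X)$ there exists $z\in S$ such that $x$ lies on a $y$–$z$ geodesic or $y$ lies on an $x$–$z$ geodesic. A vertex $u$ is maximally distant from $v$ if $d(u,v)\ge d(w,v)$ for every neighbor $w$ of $u$; $u,v$ are mutually maximally distant (MMD) if each is maximally distant from the other. The strong resolving graph $X_{\rm SR}$ has vertex set $\{x: x\text{ is MMD with some }y\}$ and edges exactly the MMD pairs. The Maker–Breaker strong resolving game on $X$: Maker and Breaker alternately select a not-yet-chosen vertex of $X$; Maker wins if the vertices he selects contain a strong resolving set of $X$, Breaker wins otherwise. In the M-game Maker moves first, in the B-game Breaker moves first. $O_{\rm SR}(X)=\mathcal{M}$ if Maker has a winning strategy in both games, $\mathcal{B}$ if Breaker has a winning strategy in both, and $\mathcal{N}$ if the first player has a winning strategy in each. *)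

theory Defs
  imports Main
begin

definition graph :: "'a set \<Rightarrow> ('a \<times> 'a) set \<Rightarrow> bool" where
  "graph V E \<longleftrightarrow> finite V \<and> E \<subseteq> V \<times> V \<and> sym E \<and> (\<forall>x. (x, x) \<notin> E)"

definition connected_graph :: "'a set \<Rightarrow> ('a \<times> 'a) set \<Rightarrow> bool" where
  "connected_graph V E \<longleftrightarrow> graph V E \<and> V \<noteq> {} \<and>
     (\<forall>x\<in>V. \<forall>y\<in>V. \<exists>n. (x, y) \<in> E ^^ n)"

definition gdist :: "('a \<times> 'a) set \<Rightarrow> 'a \<Rightarrow> 'a \<Rightarrow> nat" where
  "gdist E x y = (LEAST n. (x, y) \<in> E ^^ n)"

definition on_geodesic :: "('a \<times> 'a) set \<Rightarrow> 'a \<Rightarrow> 'a \<Rightarrow> 'a \<Rightarrow> bool" where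
  "on_geodesic E x y z \<longleftrightarrow> gdist E y x + gdist E x z = gdist E y z"

definition strong_resolving_set :: "'a set \<Rightarrow> ('a \<times> 'a) set \<Rightarrow> 'a set \<Rightarrow> bool" where
  "strong_resolving_set V E S \<longleftrightarrow> S \<subseteq> V \<and>
     (\<forall>x\<in>V. \<forall>y\<in>V. x \<noteq> y \<longrightarrow>
        (\<exists>z\<in>S. on_geodesic E x y z \<or> on_geodesic E y x z))"

definition max_distant :: "'a set \<Rightarrow> ('a \<times> 'a) set \<Rightarrow> 'a \<Rightarrow> 'a \<Rightarrow> bool" where
  "max_distant V E u v \<longleftrightarrow> u \<in> V \<and> v \<in> V \<and>
     (\<forall>w. (u, w) \<in> E \<longrightarrow> gdist E w v \<le> gdist E u v)"

definition MMD :: "'a set \<Rightarrow> ('a \<times> 'a) set \<Rightarrow> 'a \<Rightarrow> 'a \<Rightarrow> bool" where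
  "MMD V E u v \<longleftrightarrow> max_distant V E u v \<and> max_distant V E v u"

definition SR_verts :: "'a set \<Rightarrow> ('a \<times> 'a) set \<Rightarrow> 'a set" where
  "SR_verts V E = {x \<in> V. \<exists>y\<in>V. MMD V E x y}"

definition SR_edges :: "'a set \<Rightarrow> ('a \<times> 'a) set \<Rightarrow> ('a \<times> 'a) set" where
  "SR_edges V E = {(x, y). x \<in> V \<and> y \<in> V \<and> MMD V E x y}"

definition cart_verts :: "'a set \<Rightarrow> 'b set \<Rightarrow> ('a \<times> 'b) set" where
  "cart_verts VG VH = VG \<times> VH"

definition cart_edges :: "'a set \<Rightarrow> ('a \<times> 'a) set \<Rightarrow> 'b set \<Rightarrow> ('b \<times> 'b) set
    \<Rightarrow> (('a \<times> 'b) \<times> ('a \<times> 'b)) set" where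
  "cart_edges VG EG VH EH =
     {((u, w), (u', w')). (u = u' \<and> u \<in> VG \<and> (w, w') \<in> EH) \<or>
                          (w = w' \<and> w \<in> VH \<and> (u, u') \<in> EG)}"

definition graph_iso :: "'a set \<Rightarrow> ('a \<times> 'a) set \<Rightarrow> 'b set \<Rightarrow> ('b \<times> 'b) set \<Rightarrow> bool" where
  "graph_iso V1 E1 V2 E2 \<longleftrightarrow> (\<exists>f. bij_betw f V1 V2 \<and>
     (\<forall>x\<in>V1. \<forall>y\<in>V1. (x, y) \<in> E1 \<longleftrightarrow> (f x, f y) \<in> E2))"

definition aK2_verts :: "nat \<Rightarrow> (nat \<times> bool) set" where
  "aK2_verts a = {..<a} \<times> UNIV"

definition aK2_edges :: "nat \<Rightarrow> ((nat \<times> bool) \<times> (nat \<times> bool)) set" where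
  "aK2_edges a = {((i, p), (j, q)). i < a \<and> j = i \<and> p \<noteq> q}"

text \<open>Maker--Breaker game on board V; Maker wins iff his chosen set satisfies
the monotone property W.  Positions are (M, B) = sets chosen by Maker/Breaker.
maker_wins_M: Maker to move and Maker has a winning strategy;
maker_wins_B: Breaker to move and Maker has a winning strategy.\<close>

inductive maker_wins_M and maker_wins_B for V :: "'a set" and W :: "'a set \<Rightarrow> bool" where
  mwM_won: "W M \<Longrightarrow> maker_wins_M V W M B"
| mwB_won: "W M \<Longrightarrow> maker_wins_B V W M B"
| mwM_move: "v \<in> V - M - B \<Longrightarrow> maker_wins_B V W (insert v M) B \<Longrightarrow> maker_wins_M V W M B"
| mwB_move: "V - M - B \<noteq> {} \<Longrightarrow> (\<forall>v\<in>V - M - B. maker_wins_M V W M (insert v B))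
              \<Longrightarrow> maker_wins_B V W M B"

text \<open>breaker_wins_M: Maker to move and Breaker has a winning strategy;
breaker_wins_B: Breaker to move and Breaker has a winning strategy.
The game ends when all vertices are chosen.\<close>

inductive breaker_wins_M and breaker_wins_B for V :: "'a set" and W :: "'a set \<Rightarrow> bool" where
  bwM_end: "V - M - B = {} \<Longrightarrow> \<not> W M \<Longrightarrow> breaker_wins_M V W M B"
| bwB_end: "V - M - B = {} \<Longrightarrow> \<not> W M \<Longrightarrow> breaker_wins_B V W M B"
| bwM_move: "V - M - B \<noteq> {} \<Longrightarrow> (\<forall>v\<in>V - M - B. breaker_wins_B V W (insert v M) B)
              \<Longrightarrow> breaker_wins_M V W M B"
| bwB_move: "v \<in> V - M - B \<Longrightarrow> breaker_wins_M V W M (insert v B) \<Longrightarrow> breaker_wins_B V W M B"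

definition SR_win :: "'a set \<Rightarrow> ('a \<times> 'a) set \<Rightarrow> 'a set \<Rightarrow> bool" where
  "SR_win V E M \<longleftrightarrow> (\<exists>S\<subseteq>M. strong_resolving_set V E S)"

datatype outcome = Outcome_M | Outcome_B | Outcome_N

definition O_SR :: "'a set \<Rightarrow> ('a \<times> 'a) set \<Rightarrow> outcome \<Rightarrow> bool" where
  "O_SR V E res \<longleftrightarrow>
     (case res of
        Outcome_M \<Rightarrow> maker_wins_M V (SR_win V E) {} {} \<and> maker_wins_B V (SR_win V E) {} {}
      | Outcome_B \<Rightarrow> breaker_wins_M V (SR_win V E) {} {} \<and> breaker_wins_B V (SR_win V E) {} {}
      | Outcome_N \<Rightarrow> maker_wins_M V (SR_win V E) {} {} \<and> breaker_wins_B V (SR_win V E) {} {})"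

end

(* A set is strong resolving iff it meets every pair of mutually maximally distant (MMD)
   vertices, so Maker wins iff he claims a vertex cover of the strong resolving graph.  In
   G \<box> H distances add up, hence (g, h) and (g', h') are MMD iff g, g' and h, h' are.

   If every vertex of G_SR and of H_SR has a unique MMD partner, so does every vertex of the
   product; its strong resolving graph is then a perfect matching and Maker wins both games by
   answering every move of Breaker with its partner.  Otherwise, say g has two partners g1, g2
   in G, and h, h' is any MMD pair of H.  Then (g, h) with leaves (g1, h'), (g2, h') and (g, h')
   with leaves (g1, h), (g2, h) are two disjoint cherries of the product's strong resolving
   graph.  Breaker claims the centre of a cherry that Maker has not touched and then a leaf that
   Maker did not take, and thereby owns both ends of an MMD pair. *)

theory Submission
  imports Defs
begin

section \<open>Distances in connected graphs\<close>

lemma gdist_le: "(x, y) \<in> E ^^ n \<Longrightarrow> gdist E x y \<le> n"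
  unfolding gdist_def by (rule Least_le)

lemma gdist_self [simp]: "gdist E x x = 0"
  using gdist_le[of x x 0 E] by simp

lemma gdist_le_1_if_edge: "(x, y) \<in> E \<Longrightarrow> gdist E x y \<le> 1"
  using gdist_le[of x y 1 E] by simp

lemma relpow_sym:
  assumes "sym E"
  shows "(x, y) \<in> E ^^ n \<Longrightarrow> (y, x) \<in> E ^^ n"
proof (induction n arbitrary: y)
  case (Suc n)
  from Suc.prems obtain w where "(x, w) \<in> E ^^ n" "(w, y) \<in> E" by (rule relpow_Suc_E)
  with Suc.IH assms have "(w, x) \<in> E ^^ n" "(y, w) \<in> E" by (auto dest: symD)
  then show ?case by (rule relpow_Suc_I2[rotated])
qed simp

lemma relpow_map:
  assumes "\<And>a b. (a, b) \<in> R \<Longrightarrow> (f a, f b) \<in> S"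
  shows "(x, y) \<in> R ^^ n \<Longrightarrow> (f x, f y) \<in> S ^^ n"
proof (induction n arbitrary: y)
  case (Suc n)
  from Suc.prems obtain w where "(x, w) \<in> R ^^ n" "(w, y) \<in> R" by (rule relpow_Suc_E)
  with Suc assms show ?case by (meson relpow_Suc_I)
qed simp

lemma relpow_potential_le:
  fixes \<phi> :: "'a \<Rightarrow> nat"
  assumes "\<And>p q. (p, q) \<in> R \<Longrightarrow> \<phi> q \<le> \<phi> p + 1"
  shows "(x, y) \<in> R ^^ n \<Longrightarrow> \<phi> y \<le> \<phi> x + n"
proof (induction n arbitrary: y)
  case (Suc n)
  from Suc.prems obtain w where "(x, w) \<in> R ^^ n" "(w, y) \<in> R" by (rule relpow_Suc_E)
  with Suc.IH assms[of w y] show ?case by fastforce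
qed simp

lemma finite_has_max_nat:
  fixes f :: "'a \<Rightarrow> nat"
  assumes "finite A" and "a \<in> A"
  shows "\<exists>u\<in>A. \<forall>u'\<in>A. f u' \<le> f u"
proof -
  have "Max (f ` A) \<in> f ` A" using assms by (intro Max_in) auto
  then obtain u where "u \<in> A" "f u = Max (f ` A)" by (metis imageE)
  with assms show ?thesis by (intro bexI[of _ u]) auto
qed

locale cgraph =
  fixes V :: "'a set" and E :: "('a \<times> 'a) set"
  assumes connected: "connected_graph V E"
begin

lemma finite_V: "finite V"
  and V_nonempty: "V \<noteq> {}"
  and edge_in_V: "(x, y) \<in> E \<Longrightarrow> x \<in> V \<and> y \<in> V"
  and edge_sym: "(x, y) \<in> E \<Longrightarrow> (y, x) \<in> E"
  and no_loop: "(x, x) \<notin> E"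
  using connected unfolding connected_graph_def graph_def by (auto dest: symD)

lemma gdist_walk: "x \<in> V \<Longrightarrow> y \<in> V \<Longrightarrow> (x, y) \<in> E ^^ gdist E x y"
  using connected unfolding connected_graph_def gdist_def by (meson LeastI_ex)

lemma gdist_eq_0_iff: "x \<in> V \<Longrightarrow> y \<in> V \<Longrightarrow> gdist E x y = 0 \<longleftrightarrow> x = y"
  using gdist_walk[of x y] by auto

lemma gdist_sym: "x \<in> V \<Longrightarrow> y \<in> V \<Longrightarrow> gdist E x y = gdist E y x"
  using connected unfolding connected_graph_def graph_def
  by (meson antisym gdist_le gdist_walk relpow_sym)

lemma gdist_triangle:
  "x \<in> V \<Longrightarrow> y \<in> V \<Longrightarrow> z \<in> V \<Longrightarrow> gdist E x z \<le> gdist E x y + gdist E y z"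
  by (rule gdist_le) (rule relpow_trans[OF gdist_walk gdist_walk])

lemma gdist_neighbour_le: "y \<in> V \<Longrightarrow> (x, w) \<in> E \<Longrightarrow> gdist E y w \<le> gdist E y x + 1"
  using gdist_triangle[of y x w] gdist_le_1_if_edge[of x w E] edge_in_V[of x w] by simp

lemma gdist_SucE:
  assumes "x \<in> V" "y \<in> V" "gdist E x y = Suc k"
  obtains w where "(x, w) \<in> E" "gdist E w y = k"
proof -
  obtain w where w: "(x, w) \<in> E" "(w, y) \<in> E ^^ k"
    using gdist_walk[OF assms(1,2)] assms(3) by (metis relpow_Suc_E2)
  have "gdist E x y \<le> 1 + gdist E w y"
    using gdist_triangle[of x w y] gdist_le_1_if_edge[OF w(1)] edge_in_V[OF w(1)] assms by simp
  with w assms(3) gdist_le[OF w(2)] show ?thesis using that by fastforce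
qed

end

section \<open>Mutually maximally distant vertices and strong resolving sets\<close>

lemma MMD_in_V: "MMD V E u v \<Longrightarrow> u \<in> V \<and> v \<in> V"
  unfolding MMD_def max_distant_def by simp

lemma MMD_sym: "MMD V E u v \<Longrightarrow> MMD V E v u"
  unfolding MMD_def by simp

context cgraph
begin

lemma MMD_irrefl:
  assumes "card V \<ge> 2" and "MMD V E u v"
  shows "u \<noteq> v"
proof
  assume "u = v"
  have u: "u \<in> V" using MMD_in_V[OF assms(2)] by simp
  have "V \<noteq> {u}" using assms(1) by auto
  then obtain y where y: "y \<in> V" "y \<noteq> u" using u by blast
  then obtain k where "gdist E u y = Suc k" using gdist_eq_0_iff[OF u] by (metis not0_implies_Suc)
  then obtain w where w: "(u, w) \<in> E" using gdist_SucE u y(1) by metis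
  then have "gdist E w u \<noteq> 0" using gdist_eq_0_iff edge_in_V no_loop by metis
  moreover have "gdist E w v \<le> gdist E u v" using assms(2) w unfolding MMD_def max_distant_def by blast
  ultimately show False using \<open>u = v\<close> by simp
qed

lemma max_distant_on_geodesic:
  assumes m: "max_distant V E u v" and z: "z \<in> V" and g: "on_geodesic E u v z"
  shows "z = u"
proof (rule ccontr)
  assume "z \<noteq> u"
  have u: "u \<in> V" and v: "v \<in> V" using m unfolding max_distant_def by auto
  then obtain k where k: "gdist E u z = Suc k"
    using gdist_eq_0_iff[OF u z] \<open>z \<noteq> u\<close> by (metis not0_implies_Suc)
  then obtain w where w: "(u, w) \<in> E" "gdist E w z = k" using gdist_SucE[OF u z] by metis
  have wV: "w \<in> V" using edge_in_V[OF w(1)] by simp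
  have "gdist E v z \<le> gdist E v w + gdist E w z" using gdist_triangle[OF v wV z] .
  moreover have "gdist E w v \<le> gdist E u v" using m w(1) unfolding max_distant_def by blast
  ultimately show False
    using g k w(2) gdist_sym[OF wV v] gdist_sym[OF u v] unfolding on_geodesic_def by linarith
qed

lemma strong_resolving_set_hits_MMD:
  assumes "card V \<ge> 2" and S: "strong_resolving_set V E S" and m: "MMD V E u v"
  shows "u \<in> S \<or> v \<in> S"
proof -
  have "u \<noteq> v" "u \<in> V" "v \<in> V" using MMD_irrefl[OF assms(1) m] MMD_in_V[OF m] by auto
  then obtain z where z: "z \<in> S" "z \<in> V" "on_geodesic E u v z \<or> on_geodesic E v u z"
    using S unfolding strong_resolving_set_def by blast
  then have "z = u \<or> z = v"
    using max_distant_on_geodesic m unfolding MMD_def by blast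
  with z(1) show ?thesis by blast
qed

lemma ex_max_distant_beyond:
  assumes x: "x \<in> V" and y: "y \<in> V"
  obtains u where "u \<in> V" "on_geodesic E y x u" "max_distant V E u x"
proof -
  let ?A = "{u \<in> V. on_geodesic E y x u}"
  have "y \<in> ?A" using y unfolding on_geodesic_def by simp
  moreover have "finite ?A" using finite_V by simp
  ultimately obtain u where uA: "u \<in> ?A" and umax: "\<forall>u'\<in>?A. gdist E x u' \<le> gdist E x u"
    using finite_has_max_nat[where f = "gdist E x"] by blast
  have u: "u \<in> V" and yu: "gdist E x y + gdist E y u = gdist E x u"
    using uA unfolding on_geodesic_def by auto
  have "gdist E w x \<le> gdist E u x" if w: "(u, w) \<in> E" for w
  proof (rule ccontr)
    assume far: "\<not> gdist E w x \<le> gdist E u x"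
    have wV: "w \<in> V" using edge_in_V[OF w] by simp
    have "gdist E y w \<le> gdist E y u + 1" "gdist E x w \<le> gdist E x u + 1"
      using gdist_neighbour_le[OF _ w] x y by auto
    moreover have "gdist E x w \<le> gdist E x y + gdist E y w" using gdist_triangle[OF x y wV] .
    ultimately have "w \<in> ?A" "gdist E x w > gdist E x u"
      using far yu wV gdist_sym[OF wV x] gdist_sym[OF u x] unfolding on_geodesic_def by auto
    then show False using umax by fastforce
  qed
  then show ?thesis using that u uA x unfolding max_distant_def by blast
qed

lemma max_distant_through:
  assumes m: "max_distant V E u x" and v: "v \<in> V" and g: "on_geodesic E x u v"
  shows "max_distant V E u v"
  unfolding max_distant_def
proof (intro conjI allI impI)
  have u: "u \<in> V" and x: "x \<in> V" using m unfolding max_distant_def by auto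
  show "u \<in> V" "v \<in> V" by fact+
  fix w assume w: "(u, w) \<in> E"
  have wV: "w \<in> V" using edge_in_V[OF w] by simp
  have "gdist E w v \<le> gdist E w x + gdist E x v" using gdist_triangle[OF wV x v] .
  moreover have "gdist E w x \<le> gdist E u x" using m w unfolding max_distant_def by blast
  ultimately show "gdist E w v \<le> gdist E u v"
    using g gdist_sym[OF u x] unfolding on_geodesic_def by linarith
qed

text \<open>Given x and y, extend a geodesic from x through y to a vertex u maximally distant from x,
  and then one from u through x to a vertex v maximally distant from u: u and v are MMD, y lies
  on an x--u geodesic and x lies on a y--v geodesic.\<close>

lemma strong_resolving_set_if_hits_MMD:
  assumes SV: "S \<subseteq> V" and hits: "\<And>u v. MMD V E u v \<Longrightarrow> u \<in> S \<or> v \<in> S"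
  shows "strong_resolving_set V E S"
  unfolding strong_resolving_set_def
proof (intro conjI SV ballI impI)
  fix x y assume x: "x \<in> V" and y: "y \<in> V"
  obtain u where u: "u \<in> V" "on_geodesic E y x u" "max_distant V E u x"
    using ex_max_distant_beyond[OF x y] .
  obtain v where v: "v \<in> V" "on_geodesic E x u v" "max_distant V E v u"
    using ex_max_distant_beyond[OF u(1) x] .
  have "MMD V E u v" unfolding MMD_def using max_distant_through[OF u(3) v(1,2)] v(3) by blast
  with hits have "u \<in> S \<or> v \<in> S" by blast
  moreover have "on_geodesic E x y v"
    using gdist_triangle[OF y x v(1)] gdist_triangle[OF u(1) y v(1)] u(2) v(2)
      gdist_sym[OF u(1) x] gdist_sym[OF u(1) y] gdist_sym[OF x y]
    unfolding on_geodesic_def by linarith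
  ultimately show "\<exists>z\<in>S. on_geodesic E x y z \<or> on_geodesic E y x z"
    using u(2) by blast
qed

lemma ex_MMD: "\<exists>u v. MMD V E u v"
proof -
  obtain a where "a \<in> V" using V_nonempty by blast
  then obtain p where p: "p \<in> V \<times> V"
    and pmax: "\<forall>p'\<in>V \<times> V. case_prod (gdist E) p' \<le> case_prod (gdist E) p"
    using finite_has_max_nat[of "V \<times> V" "(a, a)" "case_prod (gdist E)"] finite_V by blast
  then obtain u v where uv: "p = (u, v)" "u \<in> V" "v \<in> V" by blast
  have far: "gdist E x y \<le> gdist E u v" if "x \<in> V" "y \<in> V" for x y
    using pmax that uv(1) by auto
  have "MMD V E u v"
    unfolding MMD_def max_distant_def
    using far uv(2,3) gdist_sym[OF uv(2,3)] by (auto dest: edge_in_V)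
  then show ?thesis by blast
qed

end

section \<open>Maker-Breaker games\<close>

lemma breaker_wins_not_won:
  assumes "mono W"
  shows "breaker_wins_M V W M B \<Longrightarrow> \<not> W M"
    and "breaker_wins_B V W M B \<Longrightarrow> \<not> W M"
proof (induction rule: breaker_wins_M_breaker_wins_B.inducts)
  case (bwM_move M B)
  then obtain v where "\<not> W (insert v M)" by blast
  with \<open>mono W\<close> show ?case by (metis monoD le_boolD subset_insertI)
qed

lemma maker_breaker_wins_exclusive:
  assumes "mono W"
  shows "maker_wins_M V W M B \<Longrightarrow> \<not> breaker_wins_M V W M B"
    and "maker_wins_B V W M B \<Longrightarrow> \<not> breaker_wins_B V W M B"
proof (induction rule: maker_wins_M_maker_wins_B.inducts)
  case (mwM_won M B)
  show ?case
  proof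
    assume "breaker_wins_M V W M B"
    then have "\<not> W M" by (rule breaker_wins_not_won(1)[OF \<open>mono W\<close>])
    then show False using mwM_won by contradiction
  qed
next
  case (mwB_won M B)
  show ?case
  proof
    assume "breaker_wins_B V W M B"
    then have "\<not> W M" by (rule breaker_wins_not_won(2)[OF \<open>mono W\<close>])
    then show False using mwB_won by contradiction
  qed
next
  case (mwM_move v M B)
  show ?case
  proof
    assume "breaker_wins_M V W M B"
    then show False
      by cases (use mwM_move in auto)
  qed
next
  case (mwB_move M B)
  show ?case
  proof
    assume "breaker_wins_B V W M B"
    then show False
      by cases (use mwB_move in auto)
  qed
qed

lemma card_free_insert_less:
  assumes "finite V" and "u \<in> V - M - B"
  shows "card (V - insert u M - B) < card (V - M - B)"
    and "card (V - M - insert u B) < card (V - M - B)"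
  using assms by (intro psubset_card_mono; auto)+

lemma breaker_wins_if_blocked:
  assumes fin: "finite V"
  shows "\<forall>M'. M' \<inter> B = {} \<longrightarrow> \<not> W M' \<Longrightarrow> M \<inter> B = {} \<Longrightarrow>
    breaker_wins_M V W M B \<and> breaker_wins_B V W M B"
proof (induction "card (V - M - B)" arbitrary: M B rule: less_induct)
  case less
  show ?case
  proof (cases "V - M - B = {}")
    case True
    with less.prems show ?thesis by (auto intro: bwM_end bwB_end)
  next
    case False
    then obtain v where v: "v \<in> V - M - B" by blast
    have "breaker_wins_B V W (insert u M) B" if "u \<in> V - M - B" for u
      using less.hyps[OF card_free_insert_less(1)[OF fin that]] less.prems that by blast
    moreover have "breaker_wins_M V W M (insert v B)"
      using less.hyps[OF card_free_insert_less(2)[OF fin v]] less.prems v by blast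
    ultimately show ?thesis using False v by (blast intro: bwM_move bwB_move)
  qed
qed

lemma breaker_wins_B_cherry:
  assumes fin: "finite V"
    and cherry: "\<forall>M'. W M' \<longrightarrow> c \<in> M' \<or> (l\<^sub>1 \<in> M' \<and> l\<^sub>2 \<in> M')"
    and free: "c \<in> V - M - B" "l\<^sub>1 \<in> V - M - B" "l\<^sub>2 \<in> V - M - B"
    and distinct: "c \<noteq> l\<^sub>1" "c \<noteq> l\<^sub>2" "l\<^sub>1 \<noteq> l\<^sub>2"
    and disjoint: "M \<inter> B = {}"
  shows "breaker_wins_B V W M B"
proof (rule bwB_move[OF free(1)], rule bwM_move)
  show "V - M - insert c B \<noteq> {}" using free distinct by blast
  show "\<forall>m\<in>V - M - insert c B. breaker_wins_B V W (insert m M) (insert c B)"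
  proof
    fix m assume m: "m \<in> V - M - insert c B"
    \<comment> \<open>Breaker takes a leaf that Maker did not just take\<close>
    obtain l where l: "l \<in> {l\<^sub>1, l\<^sub>2}" "l \<noteq> m" using distinct(3) by blast
    have blocked: "\<forall>M'. M' \<inter> insert l (insert c B) = {} \<longrightarrow> \<not> W M'"
      using cherry l by blast
    have "insert m M \<inter> insert l (insert c B) = {}" using m l free disjoint by auto
    then have "breaker_wins_M V W (insert m M) (insert l (insert c B))"
      using breaker_wins_if_blocked[OF fin blocked] by blast
    moreover have "l \<in> V - insert m M - insert c B" using l m free distinct by auto
    ultimately show "breaker_wins_B V W (insert m M) (insert c B)"
      by (intro bwB_move)
  qed
qed

lemma breaker_wins_two_cherries:
  assumes fin: "finite V"
    and cherry: "\<forall>M. W M \<longrightarrow> c \<in> M \<or> (l\<^sub>1 \<in> M \<and> l\<^sub>2 \<in> M)"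
    and cherry': "\<forall>M. W M \<longrightarrow> c' \<in> M \<or> (l\<^sub>1' \<in> M \<and> l\<^sub>2' \<in> M)"
    and in_V: "{c, l\<^sub>1, l\<^sub>2, c', l\<^sub>1', l\<^sub>2'} \<subseteq> V"
    and distinct: "c \<noteq> l\<^sub>1" "c \<noteq> l\<^sub>2" "l\<^sub>1 \<noteq> l\<^sub>2"
      "c' \<noteq> l\<^sub>1'" "c' \<noteq> l\<^sub>2'" "l\<^sub>1' \<noteq> l\<^sub>2'"
    and disjoint: "{c, l\<^sub>1, l\<^sub>2} \<inter> {c', l\<^sub>1', l\<^sub>2'} = {}"
  shows "breaker_wins_M V W {} {} \<and> breaker_wins_B V W {} {}"
proof
  show "breaker_wins_B V W {} {}"
    using breaker_wins_B_cherry[OF fin cherry] in_V distinct by simp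
  have "breaker_wins_B V W {m} {}" if "m \<in> V" for m
  proof (cases "m \<in> {c, l\<^sub>1, l\<^sub>2}")
    case True
    with disjoint have "m \<notin> {c', l\<^sub>1', l\<^sub>2'}" by blast
    then show ?thesis
      by (intro breaker_wins_B_cherry[OF fin cherry']) (use that in_V distinct in auto)
  next
    case False
    then show ?thesis
      by (intro breaker_wins_B_cherry[OF fin cherry]) (use that in_V distinct in auto)
  qed
  then show "breaker_wins_M V W {} {}"
    using in_V by (auto intro!: bwM_move)
qed

lemma maker_wins_pairing:
  assumes fin: "finite V" and D: "D \<subseteq> V"
    and \<sigma>: "\<And>p. p \<in> D \<Longrightarrow> \<sigma> p \<in> D \<and> \<sigma> p \<noteq> p \<and> \<sigma> (\<sigma> p) = p"
    and win: "\<And>M. M \<subseteq> V \<Longrightarrow> \<forall>p\<in>D. p \<in> M \<or> \<sigma> p \<in> M \<Longrightarrow> W M"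
  shows "M \<subseteq> V \<Longrightarrow> M \<inter> B = {} \<Longrightarrow> \<forall>p\<in>D \<inter> B. \<sigma> p \<in> M \<Longrightarrow>
    maker_wins_M V W M B \<and> maker_wins_B V W M B"
proof (induction "card (V - M - B)" arbitrary: M B rule: less_induct)
  case less
  show ?case
  proof (cases "V - M - B = {}")
    case True
    then have "\<forall>p\<in>D. p \<in> M \<or> \<sigma> p \<in> M" using less.prems D by blast
    then show ?thesis using win less.prems by (auto intro: mwM_won mwB_won)
  next
    case False
    then obtain v where v: "v \<in> V - M - B" by blast
    have "maker_wins_M V W M B"
      using less.hyps[OF card_free_insert_less(1)[OF fin v]] less.prems v by (blast intro: mwM_move)
    moreover have "maker_wins_M V W M (insert b B)" if b: "b \<in> V - M - B" for b
    proof (cases "b \<in> D \<and> \<sigma> b \<notin> M")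
      case True
      \<comment> \<open>answer Breaker's move by taking its partner\<close>
      with \<sigma> less.prems b D have free: "\<sigma> b \<in> V - M - insert b B" by (metis DiffI Diff_iff IntI insert_iff subsetD)
      have "card (V - insert (\<sigma> b) M - insert b B) < card (V - M - B)"
        using fin free b by (intro psubset_card_mono) auto
      moreover have "\<forall>p\<in>D \<inter> insert b B. \<sigma> p \<in> insert (\<sigma> b) M"
        using less.prems(3) by blast
      ultimately have "maker_wins_B V W (insert (\<sigma> b) M) (insert b B)"
        using less.hyps less.prems(1,2) free b by blast
      then show ?thesis by (rule mwM_move[OF free])
    next
      case False
      then show ?thesis using less.hyps[OF card_free_insert_less(2)[OF fin b]] less.prems b by auto
    qed
    ultimately show ?thesis using False by (blast intro: mwB_move)
  qed
qed

section \<open>Perfect matchings\<close>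

lemma card_aK2_verts: "card (aK2_verts a) = 2 * a"
  unfolding aK2_verts_def by (simp add: card_cartesian_product)

lemma aK2_unique_neighbour:
  assumes iso: "graph_iso S F (aK2_verts a) (aK2_edges a)"
    and in_S: "x \<in> S" "y \<in> S" "z \<in> S" and edges: "(x, y) \<in> F" "(x, z) \<in> F"
  shows "y = z"
proof -
  obtain f where bij: "bij_betw f S (aK2_verts a)"
    and hom: "\<forall>x\<in>S. \<forall>y\<in>S. (x, y) \<in> F \<longleftrightarrow> (f x, f y) \<in> aK2_edges a"
    using iso unfolding graph_iso_def by blast
  have "(f x, f y) \<in> aK2_edges a" "(f x, f z) \<in> aK2_edges a" using hom in_S edges by auto
  then have "f y = f z" unfolding aK2_edges_def by auto
  then show "y = z" using bij in_S unfolding bij_betw_def inj_on_def by blast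
qed

text \<open>(i, True) and (i, False) are the two ends of the i-th edge of aK2; R is meant to contain
  exactly one vertex of every pair {x, \<sigma> x}, numbered by e.\<close>

definition involution_label ::
    "('a \<Rightarrow> 'a) \<Rightarrow> 'a set \<Rightarrow> ('a \<Rightarrow> nat) \<Rightarrow> 'a \<Rightarrow> nat \<times> bool" where
  "involution_label \<sigma> R e x = (if x \<in> R then (e x, True) else (e (\<sigma> x), False))"

context
  fixes S :: "'a set" and \<sigma> :: "'a \<Rightarrow> 'a" and R :: "'a set" and e :: "'a \<Rightarrow> nat" and n :: nat
  assumes \<sigma>: "\<And>x. x \<in> S \<Longrightarrow> \<sigma> x \<in> S \<and> \<sigma> x \<noteq> x \<and> \<sigma> (\<sigma> x) = x"
    and R_subset: "R \<subseteq> S" and R_iff: "\<And>x. x \<in> S \<Longrightarrow> x \<in> R \<longleftrightarrow> \<sigma> x \<notin> R"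
    and e: "bij_betw e R {..<n}"
begin

lemma inj_on_involution_label: "inj_on (involution_label \<sigma> R e) S"
proof (rule inj_onI)
  fix x y assume xy: "x \<in> S" "y \<in> S" and eq: "involution_label \<sigma> R e x = involution_label \<sigma> R e y"
  have e_inj: "inj_on e R" using e by (rule bij_betw_imp_inj_on)
  from eq have same_side: "x \<in> R \<longleftrightarrow> y \<in> R"
    unfolding involution_label_def by (auto split: if_splits)
  show "x = y"
  proof (cases "x \<in> R")
    case True
    then show ?thesis
      using same_side eq inj_onD[OF e_inj, of x y] unfolding involution_label_def by simp
  next
    case False
    then have "\<sigma> x = \<sigma> y"
      using same_side eq xy R_iff inj_onD[OF e_inj, of "\<sigma> x" "\<sigma> y"]
      unfolding involution_label_def by simp
    then show ?thesis using \<sigma> xy by metis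
  qed
qed

lemma bij_betw_involution_label: "bij_betw (involution_label \<sigma> R e) S (aK2_verts n)"
proof (rule bij_betw_imageI)
  let ?f = "involution_label \<sigma> R e"
  have e_range: "e ` R = {..<n}" using e by (rule bij_betw_imp_surj_on)
  show "inj_on ?f S" by (rule inj_on_involution_label)
  show "?f ` S = aK2_verts n"
  proof
    show "?f ` S \<subseteq> aK2_verts n"
      using R_iff e_range unfolding aK2_verts_def involution_label_def by auto
    show "aK2_verts n \<subseteq> ?f ` S"
    proof
      fix ip assume "ip \<in> aK2_verts n"
      then obtain i p where ip: "ip = (i, p)" and "i \<in> e ` R"
        using e_range unfolding aK2_verts_def by auto
      then obtain x where x: "x \<in> R" "e x = i" by blast
      then have xS: "x \<in> S" using R_subset by blast
      have "\<sigma> x \<notin> R" "\<sigma> (\<sigma> x) = x" using R_iff[OF xS] \<sigma>[OF xS] x by auto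
      then have "?f x = (i, True)" "?f (\<sigma> x) = (i, False)"
        using x unfolding involution_label_def by simp_all
      then have "(i, True) \<in> ?f ` S" "(i, False) \<in> ?f ` S" using xS \<sigma>[OF xS] by (metis image_eqI)+
      then show "ip \<in> ?f ` S" using ip by (cases p) simp_all
    qed
  qed
qed

lemma involution_label_aK2_edge_iff:
  assumes xy: "x \<in> S" "y \<in> S"
  shows "(involution_label \<sigma> R e x, involution_label \<sigma> R e y) \<in> aK2_edges n \<longleftrightarrow> y = \<sigma> x"
proof -
  let ?f = "involution_label \<sigma> R e"
  have e_inj: "inj_on e R" using e by (rule bij_betw_imp_inj_on)
  have e_range: "e ` R = {..<n}" using e by (rule bij_betw_imp_surj_on)
  have "fst (?f x) < n" using xy R_iff e_range unfolding involution_label_def by auto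
  then have "(?f x, ?f y) \<in> aK2_edges n \<longleftrightarrow> fst (?f x) = fst (?f y) \<and> snd (?f x) \<noteq> snd (?f y)"
    unfolding aK2_edges_def by (cases "?f x"; cases "?f y") auto
  moreover consider "x \<in> R \<longleftrightarrow> y \<in> R" | "x \<in> R" "y \<notin> R" | "x \<notin> R" "y \<in> R" by blast
  then have "y = \<sigma> x \<longleftrightarrow> fst (?f x) = fst (?f y) \<and> snd (?f x) \<noteq> snd (?f y)"
  proof cases
    case 1
    then show ?thesis using R_iff[OF xy(1)] unfolding involution_label_def by auto
  next
    case 2
    then have "e x = e (\<sigma> y) \<longleftrightarrow> x = \<sigma> y" using xy R_iff inj_on_eq_iff[OF e_inj] by blast
    then show ?thesis using 2 \<sigma>[OF xy(1)] \<sigma>[OF xy(2)] unfolding involution_label_def by auto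
  next
    case 3
    then have "e (\<sigma> x) = e y \<longleftrightarrow> \<sigma> x = y" using xy R_iff inj_on_eq_iff[OF e_inj] by blast
    then show ?thesis using 3 \<sigma>[OF xy(1)] unfolding involution_label_def by auto
  qed
  ultimately show ?thesis by simp
qed

end

lemma involution_transversalE:
  assumes \<sigma>: "\<And>x. x \<in> S \<Longrightarrow> \<sigma> x \<in> S \<and> \<sigma> x \<noteq> x \<and> \<sigma> (\<sigma> x) = x"
  obtains R where "R \<subseteq> S" and "\<And>x. x \<in> S \<Longrightarrow> x \<in> R \<longleftrightarrow> \<sigma> x \<notin> R"
proof
  define r :: "'a set \<Rightarrow> 'a" where "r q = (SOME z. z \<in> q)" for q
  have r_in: "r {x, \<sigma> x} \<in> {x, \<sigma> x}" for x
    unfolding r_def by (rule someI[of _ x]) simp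
  show "{x \<in> S. r {x, \<sigma> x} = x} \<subseteq> S" by blast
  fix x assume x: "x \<in> S"
  have "{\<sigma> x, \<sigma> (\<sigma> x)} = {x, \<sigma> x}" using \<sigma>[OF x] by auto
  then show "x \<in> {x \<in> S. r {x, \<sigma> x} = x} \<longleftrightarrow> \<sigma> x \<notin> {x \<in> S. r {x, \<sigma> x} = x}"
    using r_in[of x] \<sigma>[OF x] x by auto
qed

lemma graph_iso_aK2_if_involution:
  assumes fin: "finite S"
    and \<sigma>: "\<And>x. x \<in> S \<Longrightarrow> \<sigma> x \<in> S \<and> \<sigma> x \<noteq> x \<and> \<sigma> (\<sigma> x) = x"
    and edges: "\<And>x y. x \<in> S \<Longrightarrow> y \<in> S \<Longrightarrow> (x, y) \<in> F \<longleftrightarrow> y = \<sigma> x"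
  shows "\<exists>a. graph_iso S F (aK2_verts a) (aK2_edges a)"
proof -
  obtain R where R: "R \<subseteq> S" "\<And>x. x \<in> S \<Longrightarrow> x \<in> R \<longleftrightarrow> \<sigma> x \<notin> R"
    using involution_transversalE[OF \<sigma>] by blast
  obtain e where e: "bij_betw e R {..<card R}"
    using ex_bij_betw_finite_nat[OF finite_subset[OF R(1) fin]] atLeast0LessThan by metis
  have "graph_iso S F (aK2_verts (card R)) (aK2_edges (card R))"
    unfolding graph_iso_def
    using bij_betw_involution_label[OF \<sigma> R e] involution_label_aK2_edge_iff[OF \<sigma> R e] edges
    by blast
  then show ?thesis by blast
qed

section \<open>The strong resolving graph\<close>

lemma mono_SR_win: "mono (SR_win V E)"
  unfolding SR_win_def by (intro monoI le_boolI) blast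

lemma SR_edges_iff: "(x, y) \<in> SR_edges V E \<longleftrightarrow> MMD V E x y"
  unfolding SR_edges_def using MMD_in_V[of V E x y] by auto

lemma SR_verts_iff: "x \<in> SR_verts V E \<longleftrightarrow> (\<exists>y. MMD V E x y)"
  unfolding SR_verts_def by (auto dest: MMD_in_V)

definition MMD_unique :: "'a set \<Rightarrow> ('a \<times> 'a) set \<Rightarrow> bool" where
  "MMD_unique V E \<longleftrightarrow> (\<forall>x y z. MMD V E x y \<longrightarrow> MMD V E x z \<longrightarrow> y = z)"

definition MMD_partner :: "'a set \<Rightarrow> ('a \<times> 'a) set \<Rightarrow> 'a \<Rightarrow> 'a" where
  "MMD_partner V E x = (THE y. MMD V E x y)"

lemma MMD_iff_partner:
  assumes "MMD_unique V E"
  shows "MMD V E x y \<longleftrightarrow> x \<in> SR_verts V E \<and> y = MMD_partner V E x"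
  using assms theI'[of "MMD V E x"] unfolding MMD_unique_def MMD_partner_def SR_verts_iff by blast

lemma MMD_unique_if_SR_iso_aK2:
  assumes "graph_iso (SR_verts V E) (SR_edges V E) (aK2_verts a) (aK2_edges a)"
  shows "MMD_unique V E"
  unfolding MMD_unique_def
proof (intro allI impI)
  fix x y z assume xy: "MMD V E x y" and xz: "MMD V E x z"
  have "x \<in> SR_verts V E" "y \<in> SR_verts V E" "z \<in> SR_verts V E"
    using xy xz MMD_sym[OF xy] MMD_sym[OF xz] unfolding SR_verts_iff by blast+
  moreover have "(x, y) \<in> SR_edges V E" "(x, z) \<in> SR_edges V E"
    using xy xz unfolding SR_edges_iff by blast+
  ultimately show "y = z" by (rule aK2_unique_neighbour[OF assms])
qed

context cgraph
begin

lemma SR_win_hits_MMD: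
  "card V \<ge> 2 \<Longrightarrow> SR_win V E M \<Longrightarrow> MMD V E u v \<Longrightarrow> u \<in> M \<or> v \<in> M"
  unfolding SR_win_def using strong_resolving_set_hits_MMD by blast

lemma SR_win_if_hits_MMD:
  "M \<subseteq> V \<Longrightarrow> (\<And>u v. MMD V E u v \<Longrightarrow> u \<in> M \<or> v \<in> M) \<Longrightarrow> SR_win V E M"
  unfolding SR_win_def using strong_resolving_set_if_hits_MMD by blast

lemma MMD_partner_involution:
  assumes "card V \<ge> 2" and "MMD_unique V E" and x: "x \<in> SR_verts V E"
  shows "MMD_partner V E x \<in> SR_verts V E \<and> MMD_partner V E x \<noteq> x
    \<and> MMD_partner V E (MMD_partner V E x) = x"
proof -
  have "MMD V E x (MMD_partner V E x)" using MMD_iff_partner[OF assms(2)] x by blast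
  then show ?thesis using MMD_iff_partner[OF assms(2)] MMD_sym MMD_irrefl[OF assms(1)] by metis
qed

lemma SR_iso_aK2_if_MMD_unique:
  assumes "card V \<ge> 2" and "MMD_unique V E"
  shows "\<exists>a>0. graph_iso (SR_verts V E) (SR_edges V E) (aK2_verts a) (aK2_edges a)"
proof -
  have fin: "finite (SR_verts V E)" using finite_V unfolding SR_verts_def by simp
  have edges: "(x, y) \<in> SR_edges V E \<longleftrightarrow> y = MMD_partner V E x" if "x \<in> SR_verts V E" for x y
    using MMD_iff_partner[OF assms(2)] that unfolding SR_edges_iff by blast
  obtain a where iso: "graph_iso (SR_verts V E) (SR_edges V E) (aK2_verts a) (aK2_edges a)"
    using graph_iso_aK2_if_involution[OF fin MMD_partner_involution[OF assms] edges] by blast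
  obtain u v where "MMD V E u v" using ex_MMD by blast
  then have "u \<in> SR_verts V E" unfolding SR_verts_iff by blast
  then have "card (SR_verts V E) > 0" using fin card_gt_0_iff by blast
  moreover have "card (SR_verts V E) = 2 * a"
    using iso bij_betw_same_card card_aK2_verts unfolding graph_iso_def by metis
  ultimately show ?thesis using iso by auto
qed

lemma maker_wins_if_MMD_unique:
  assumes "card V \<ge> 2" and "MMD_unique V E"
  shows "maker_wins_M V (SR_win V E) {} {} \<and> maker_wins_B V (SR_win V E) {} {}"
proof (rule maker_wins_pairing[OF finite_V])
  show "SR_verts V E \<subseteq> V" unfolding SR_verts_def by blast
  show "\<And>p. p \<in> SR_verts V E \<Longrightarrow> MMD_partner V E p \<in> SR_verts V E \<and> MMD_partner V E p \<noteq> p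
    \<and> MMD_partner V E (MMD_partner V E p) = p"
    by (rule MMD_partner_involution[OF assms])
  show "SR_win V E M"
    if M: "M \<subseteq> V" and hits: "\<forall>p\<in>SR_verts V E. p \<in> M \<or> MMD_partner V E p \<in> M" for M
  proof -
    have "u \<in> M \<or> v \<in> M" if "MMD V E u v" for u v
      using that hits MMD_iff_partner[OF assms(2), of u v] by auto
    then show ?thesis by (rule SR_win_if_hits_MMD[OF M])
  qed
qed auto

lemma breaker_wins_if_two_MMD_cherries:
  assumes "card V \<ge> 2"
    and "MMD V E c l\<^sub>1" "MMD V E c l\<^sub>2" "l\<^sub>1 \<noteq> l\<^sub>2"
    and "MMD V E c' l\<^sub>1'" "MMD V E c' l\<^sub>2'" "l\<^sub>1' \<noteq> l\<^sub>2'"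
    and disjoint: "{c, l\<^sub>1, l\<^sub>2} \<inter> {c', l\<^sub>1', l\<^sub>2'} = {}"
  shows "breaker_wins_M V (SR_win V E) {} {} \<and> breaker_wins_B V (SR_win V E) {} {}"
proof (rule breaker_wins_two_cherries[OF finite_V _ _ _ _ _ _ _ _ _ disjoint])
  show "\<forall>M. SR_win V E M \<longrightarrow> c \<in> M \<or> l\<^sub>1 \<in> M \<and> l\<^sub>2 \<in> M"
    using SR_win_hits_MMD assms(1-3) by blast
  show "\<forall>M. SR_win V E M \<longrightarrow> c' \<in> M \<or> l\<^sub>1' \<in> M \<and> l\<^sub>2' \<in> M"
    using SR_win_hits_MMD assms(1,5,6) by blast
  show "{c, l\<^sub>1, l\<^sub>2, c', l\<^sub>1', l\<^sub>2'} \<subseteq> V"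
    using MMD_in_V[OF assms(2)] MMD_in_V[OF assms(3)] MMD_in_V[OF assms(5)] MMD_in_V[OF assms(6)]
    by simp
  show "c \<noteq> l\<^sub>1" "c \<noteq> l\<^sub>2" "c' \<noteq> l\<^sub>1'" "c' \<noteq> l\<^sub>2'"
    using MMD_irrefl[OF assms(1)] assms(2,3,5,6) by blast+
  show "l\<^sub>1 \<noteq> l\<^sub>2" "l\<^sub>1' \<noteq> l\<^sub>2'" by fact+
qed

end

section \<open>Cartesian products\<close>

lemma card_cart_verts_ge_2:
  "card VG \<ge> 2 \<Longrightarrow> card VH \<ge> 2 \<Longrightarrow> card (cart_verts VG VH) \<ge> 2"
  using mult_le_mono[of 2 "card VG" 2 "card VH"] unfolding cart_verts_def card_cartesian_product
  by simp

locale cart_product = G: cgraph VG EG + H: cgraph VH EH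
  for VG :: "'a set" and EG :: "('a \<times> 'a) set" and VH :: "'b set" and EH :: "('b \<times> 'b) set"
begin

abbreviation "VP \<equiv> cart_verts VG VH"
abbreviation "EP \<equiv> cart_edges VG EG VH EH"

lemma cart_walk:
  assumes "g \<in> VG" "g' \<in> VG" "h \<in> VH" "h' \<in> VH"
  shows "((g, h), (g', h')) \<in> EP ^^ (gdist EG g g' + gdist EH h h')"
proof -
  have "((a, h), (b, h)) \<in> EP" if "(a, b) \<in> EG" for a b
    using that assms(3) unfolding cart_edges_def by simp
  from relpow_map[where f = "\<lambda>a. (a, h)", OF this G.gdist_walk[OF assms(1,2)]]
  have "((g, h), (g', h)) \<in> EP ^^ gdist EG g g'" .
  moreover have "((g', a), (g', b)) \<in> EP" if "(a, b) \<in> EH" for a b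
    using that assms(2) unfolding cart_edges_def by simp
  from relpow_map[where f = "\<lambda>b. (g', b)", OF this H.gdist_walk[OF assms(3,4)]]
  have "((g', h), (g', h')) \<in> EP ^^ gdist EH h h'" .
  ultimately show ?thesis by (rule relpow_trans)
qed

lemma connected_cart: "connected_graph VP EP"
  unfolding connected_graph_def graph_def
proof (intro conjI)
  show "finite VP" using G.finite_V H.finite_V unfolding cart_verts_def by simp
  show "EP \<subseteq> VP \<times> VP"
    using G.edge_in_V H.edge_in_V unfolding cart_verts_def cart_edges_def by auto
  show "sym EP" using G.edge_sym H.edge_sym unfolding cart_edges_def sym_def by auto
  show "\<forall>x. (x, x) \<notin> EP" using G.no_loop H.no_loop unfolding cart_edges_def by auto
  show "VP \<noteq> {}" using G.V_nonempty H.V_nonempty unfolding cart_verts_def by simp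
  show "\<forall>x\<in>VP. \<forall>y\<in>VP. \<exists>n. (x, y) \<in> EP ^^ n" using cart_walk unfolding cart_verts_def by blast
qed

sublocale P: cgraph VP EP
  by unfold_locales (rule connected_cart)

lemma gdist_cart:
  assumes "g \<in> VG" "g' \<in> VG" "h \<in> VH" "h' \<in> VH"
  shows "gdist EP (g, h) (g', h') = gdist EG g g' + gdist EH h h'"
proof (rule antisym)
  show "gdist EP (g, h) (g', h') \<le> gdist EG g g' + gdist EH h h'"
    by (rule gdist_le[OF cart_walk[OF assms]])
  let ?\<phi> = "\<lambda>(x, y). gdist EG g x + gdist EH h y"
  \<comment> \<open>each step of a walk in the product moves one coordinate along an edge\<close>
  have "?\<phi> q \<le> ?\<phi> p + 1" if "(p, q) \<in> EP" for p q
    using that G.gdist_neighbour_le[OF assms(1)] H.gdist_neighbour_le[OF assms(3)]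
    unfolding cart_edges_def by auto
  from relpow_potential_le[where \<phi> = ?\<phi>, OF this P.gdist_walk[of "(g, h)" "(g', h')"]]
  show "gdist EG g g' + gdist EH h h' \<le> gdist EP (g, h) (g', h')"
    using assms unfolding cart_verts_def by simp
qed

lemma max_distant_cart_iff:
  assumes g: "g \<in> VG" "g' \<in> VG" and h: "h \<in> VH" "h' \<in> VH"
  shows "max_distant VP EP (g, h) (g', h') \<longleftrightarrow> max_distant VG EG g g' \<and> max_distant VH EH h h'"
proof -
  have "max_distant VP EP (g, h) (g', h') \<longleftrightarrow>
      (\<forall>w. (g, w) \<in> EG \<longrightarrow> gdist EP (w, h) (g', h') \<le> gdist EP (g, h) (g', h')) \<and>
      (\<forall>w. (h, w) \<in> EH \<longrightarrow> gdist EP (g, w) (g', h') \<le> gdist EP (g, h) (g', h'))"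
    using g h unfolding max_distant_def cart_verts_def cart_edges_def by auto
  also have "\<dots> \<longleftrightarrow> max_distant VG EG g g' \<and> max_distant VH EH h h'"
    using g h G.edge_in_V H.edge_in_V unfolding max_distant_def by (auto simp: gdist_cart)
  finally show ?thesis .
qed

lemma MMD_cart_iff: "MMD VP EP (g, h) (g', h') \<longleftrightarrow> MMD VG EG g g' \<and> MMD VH EH h h'"
proof (cases "g \<in> VG \<and> g' \<in> VG \<and> h \<in> VH \<and> h' \<in> VH")
  case True
  then show ?thesis unfolding MMD_def by (auto simp: max_distant_cart_iff)
next
  case False
  then show ?thesis
    using MMD_in_V[of VP EP "(g, h)" "(g', h')"] MMD_in_V[of VG EG g g'] MMD_in_V[of VH EH h h']
    unfolding cart_verts_def by auto
qed

lemma MMD_unique_cart: "MMD_unique VG EG \<Longrightarrow> MMD_unique VH EH \<Longrightarrow> MMD_unique VP EP"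
  unfolding MMD_unique_def split_paired_All MMD_cart_iff by blast

lemma breaker_wins_cart:
  assumes "card VG \<ge> 2" "card VH \<ge> 2" and "\<not> (MMD_unique VG EG \<and> MMD_unique VH EH)"
  shows "breaker_wins_M VP (SR_win VP EP) {} {} \<and> breaker_wins_B VP (SR_win VP EP) {} {}"
proof -
  have card: "card VP \<ge> 2" using card_cart_verts_ge_2[OF assms(1,2)] .
  from assms(3) consider (G) "\<not> MMD_unique VG EG" | (H) "\<not> MMD_unique VH EH" by blast
  then show ?thesis
  proof cases
    case G
    then obtain g g\<^sub>1 g\<^sub>2 where g: "MMD VG EG g g\<^sub>1" "MMD VG EG g g\<^sub>2" "g\<^sub>1 \<noteq> g\<^sub>2"
      unfolding MMD_unique_def by blast
    obtain h h' where h: "MMD VH EH h h'" using H.ex_MMD by blast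
    have "g \<noteq> g\<^sub>1" "g \<noteq> g\<^sub>2" "h \<noteq> h'"
      using G.MMD_irrefl[OF assms(1)] H.MMD_irrefl[OF assms(2)] g h by blast+
    then show ?thesis
      using P.breaker_wins_if_two_MMD_cherries[OF card,
          of "(g, h)" "(g\<^sub>1, h')" "(g\<^sub>2, h')" "(g, h')" "(g\<^sub>1, h)" "(g\<^sub>2, h)"]
        g h MMD_sym[OF h] by (auto simp: MMD_cart_iff)
  next
    case H
    then obtain h h\<^sub>1 h\<^sub>2 where h: "MMD VH EH h h\<^sub>1" "MMD VH EH h h\<^sub>2" "h\<^sub>1 \<noteq> h\<^sub>2"
      unfolding MMD_unique_def by blast
    obtain g g' where g: "MMD VG EG g g'" using G.ex_MMD by blast
    have "h \<noteq> h\<^sub>1" "h \<noteq> h\<^sub>2" "g \<noteq> g'"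
      using H.MMD_irrefl[OF assms(2)] G.MMD_irrefl[OF assms(1)] g h by blast+
    then show ?thesis
      using P.breaker_wins_if_two_MMD_cherries[OF card,
          of "(g, h)" "(g', h\<^sub>1)" "(g', h\<^sub>2)" "(g', h)" "(g, h\<^sub>1)" "(g, h\<^sub>2)"]
        g h MMD_sym[OF g] by (auto simp: MMD_cart_iff)
  qed
qed

end

theorem mainTheorem14:
  fixes VG :: "'a set" and EG :: "('a \<times> 'a) set"
    and VH :: "'b set" and EH :: "('b \<times> 'b) set"
  assumes "connected_graph VG EG" and "card VG \<ge> 2"
    and "connected_graph VH EH" and "card VH \<ge> 2"
  shows "(O_SR (cart_verts VG VH) (cart_edges VG EG VH EH) Outcome_M \<or>
          O_SR (cart_verts VG VH) (cart_edges VG EG VH EH) Outcome_B) \<and>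
         (O_SR (cart_verts VG VH) (cart_edges VG EG VH EH) Outcome_M \<longleftrightarrow>
          (\<exists>a b. a > 0 \<and> b > 0 \<and>
             graph_iso (SR_verts VG EG) (SR_edges VG EG) (aK2_verts a) (aK2_edges a) \<and>
             graph_iso (SR_verts VH EH) (SR_edges VH EH) (aK2_verts b) (aK2_edges b)))"
proof -
  interpret cart_product VG EG VH EH
    by unfold_locales (fact assms(1,3))+
  let ?W = "SR_win VP EP"
  have card: "card VP \<ge> 2" using card_cart_verts_ge_2[OF assms(2,4)] .
  show ?thesis
  proof (cases "MMD_unique VG EG \<and> MMD_unique VH EH")
    case True
    then have "maker_wins_M VP ?W {} {} \<and> maker_wins_B VP ?W {} {}"
      using P.maker_wins_if_MMD_unique[OF card] MMD_unique_cart by blast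
    then show ?thesis
      using True G.SR_iso_aK2_if_MMD_unique[OF assms(2)] H.SR_iso_aK2_if_MMD_unique[OF assms(4)]
      unfolding O_SR_def by auto
  next
    case False
    then have breaker: "breaker_wins_M VP ?W {} {} \<and> breaker_wins_B VP ?W {} {}"
      using breaker_wins_cart[OF assms(2,4)] by blast
    then have "\<not> maker_wins_M VP ?W {} {}"
      using maker_breaker_wins_exclusive(1)[OF mono_SR_win] by blast
    then show ?thesis
      using breaker False MMD_unique_if_SR_iso_aK2[of VG EG] MMD_unique_if_SR_iso_aK2[of VH EH]
      unfolding O_SR_def by auto
  qed
qed

end
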